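(* For every reduced strategy $\sigma\in\mathcal S$, $$\sum_{a\in\mathcal A(\sigma)}\frac{1}{\beta(a)}=1.$$
   Context: Game tree: $V$ is the node set of a finite rooted tree with root $r$ and leaf set $L$; $C(v)$ denotes the set of children of $v$ and $p(v)$ the parent of $v\ne r$. The internal nodes are partitioned into infosets $N$ and actions $\mathcal A$ with $r\in N$, $C(v)\subseteq\mathcal A$ and $|C(v)|>1$ for $v\in N$, and $C(a)\subseteq N\cup L$ for $a\in\mathcal A$. A strategy is $\sigma:N\to V$ with $\sigma(v)\in C(v)$. For a strategy $\sigma$, $V(\sigma)$ is the smallest subset of $V$ containing $r$, containing $\sigma(v)$ for each $v\in N\cap V(\sigma)$, and containing $C(a)$ for each $a\in\mathcal A\cap V(\sigma)$; the reduced strategy is its restriction to $N\cap V(\sigma)$; $\mathcal S$ is the set of reduced strategies and $\mathcal A(\sigma):=\mathcal A\cap V(\sigma)$. Define $m:N\cup\mathcal A\to\mathbb N$ recursively from the bottom by $m(a)=1+\sum_{v\in C(a)\cap N}m(v)$ for $a\in\mathcal A$ and $m(v)=\sum_{a\in C(v)}m(a)$ for $v\in N$. Define $\beta:N\cup\mathcal A\to\mathbb R$ from the top by $\beta(r)=1$, $\beta(a)=m(a)\beta(p(a))$ for $a\in\mathcal A$, and $\beta(v)=\beta(p(v))/m(v)$ for $v\in N\setminus\{r\}$. *)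

theory Defs
  imports Main "HOL.Real"
begin

definition children :: "'v set \<Rightarrow> 'v \<Rightarrow> ('v \<Rightarrow> 'v) \<Rightarrow> 'v \<Rightarrow> 'v set" where
  "children V r par v = {w \<in> V. w \<noteq> r \<and> par w = v}"

definition leaves :: "'v set \<Rightarrow> 'v \<Rightarrow> ('v \<Rightarrow> 'v) \<Rightarrow> 'v set" where
  "leaves V r par = {v \<in> V. children V r par v = {}}"

definition rooted_tree :: "'v set \<Rightarrow> 'v \<Rightarrow> ('v \<Rightarrow> 'v) \<Rightarrow> bool" where
  "rooted_tree V r par \<longleftrightarrow> finite V \<and> r \<in> V \<and>
     (\<forall>v \<in> V - {r}. par v \<in> V) \<and> (\<forall>v \<in> V. \<exists>n. (par ^^ n) v = r)"

definition game_tree :: "'v set \<Rightarrow> 'v \<Rightarrow> ('v \<Rightarrow> 'v) \<Rightarrow> 'v set \<Rightarrow> 'v set \<Rightarrow> bool" where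
  "game_tree V r par N Act \<longleftrightarrow> rooted_tree V r par \<and>
     N \<union> Act = V - leaves V r par \<and> N \<inter> Act = {} \<and> r \<in> N \<and>
     (\<forall>v \<in> N. children V r par v \<subseteq> Act \<and> card (children V r par v) > 1) \<and>
     (\<forall>a \<in> Act. children V r par a \<subseteq> N \<union> leaves V r par)"

definition is_strategy :: "'v set \<Rightarrow> 'v \<Rightarrow> ('v \<Rightarrow> 'v) \<Rightarrow> 'v set \<Rightarrow> ('v \<Rightarrow> 'v) \<Rightarrow> bool" where
  "is_strategy V r par N \<sigma> \<longleftrightarrow> (\<forall>v \<in> N. \<sigma> v \<in> children V r par v)"

inductive_set strat_nodes :: "'v set \<Rightarrow> 'v \<Rightarrow> ('v \<Rightarrow> 'v) \<Rightarrow> 'v set \<Rightarrow> 'v set \<Rightarrow> ('v \<Rightarrow> 'v) \<Rightarrow> 'v set"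
  for V r par N Act \<sigma> where
  root: "r \<in> strat_nodes V r par N Act \<sigma>"
| choose: "v \<in> strat_nodes V r par N Act \<sigma> \<Longrightarrow> v \<in> N \<Longrightarrow> \<sigma> v \<in> strat_nodes V r par N Act \<sigma>"
| act: "a \<in> strat_nodes V r par N Act \<sigma> \<Longrightarrow> a \<in> Act \<Longrightarrow> w \<in> children V r par a
          \<Longrightarrow> w \<in> strat_nodes V r par N Act \<sigma>"

text \<open>m, defined bottom-up; implemented with fuel (card V exceeds the height).\<close>
fun m_fuel :: "'v set \<Rightarrow> 'v \<Rightarrow> ('v \<Rightarrow> 'v) \<Rightarrow> 'v set \<Rightarrow> 'v set \<Rightarrow> nat \<Rightarrow> 'v \<Rightarrow> nat" where
  "m_fuel V r par N Act 0 v = 0"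
| "m_fuel V r par N Act (Suc k) v =
     (if v \<in> Act then 1 + (\<Sum>w \<in> children V r par v \<inter> N. m_fuel V r par N Act k w)
      else if v \<in> N then (\<Sum>a \<in> children V r par v. m_fuel V r par N Act k a)
      else 0)"

definition mval :: "'v set \<Rightarrow> 'v \<Rightarrow> ('v \<Rightarrow> 'v) \<Rightarrow> 'v set \<Rightarrow> 'v set \<Rightarrow> 'v \<Rightarrow> nat" where
  "mval V r par N Act v = m_fuel V r par N Act (card V) v"

text \<open>beta, defined top-down; implemented with fuel (card V exceeds the depth).\<close>
fun beta_fuel :: "'v set \<Rightarrow> 'v \<Rightarrow> ('v \<Rightarrow> 'v) \<Rightarrow> 'v set \<Rightarrow> 'v set \<Rightarrow> nat \<Rightarrow> 'v \<Rightarrow> real" where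
  "beta_fuel V r par N Act 0 v = 1"
| "beta_fuel V r par N Act (Suc k) v =
     (if v = r then 1
      else if v \<in> Act then real (mval V r par N Act v) * beta_fuel V r par N Act k (par v)
      else beta_fuel V r par N Act k (par v) / real (mval V r par N Act v))"

definition beta :: "'v set \<Rightarrow> 'v \<Rightarrow> ('v \<Rightarrow> 'v) \<Rightarrow> 'v set \<Rightarrow> 'v set \<Rightarrow> 'v \<Rightarrow> real" where
  "beta V r par N Act v = beta_fuel V r par N Act (card V) v"

end

theory Submission
  imports Defs
begin

(* For an action a below the infoset v = p(a), the recursions for m and beta give
   1/beta(a) = 1/beta(v) - (sum of 1/beta(w) over the infosets w in C(a)), because
   beta(w) = beta(a)/m(w) and m(a) = 1 + (sum of m(w)).  Summed over the actions of V(sigma)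
   this telescopes: every infoset of V(sigma) is the parent of exactly one action of V(sigma),
   namely its sigma-choice, and every infoset of V(sigma) other than r is a child of exactly
   one action of V(sigma).  Only 1/beta(r) = 1 survives. *)

lemma Least_funpow_Suc:
  assumes "(f ^^ n) v = r" and "v \<noteq> r"
  shows "(LEAST n. (f ^^ n) v = r) = Suc (LEAST n. (f ^^ n) (f v) = r)"
  using assms by (subst Least_Suc) (simp_all del: funpow.simps add: funpow_Suc_right)

lemma Least_funpow_less_card:
  assumes "finite V" and "v \<in> V" and "(f ^^ n) v = r" and "\<forall>x \<in> V - {r}. f x \<in> V"
  shows "(LEAST n. (f ^^ n) v = r) < card V"
proof -
  define d where "d = (LEAST n. (f ^^ n) v = r)"
  have at_d: "(f ^^ d) v = r"
    unfolding d_def using assms(3) by (rule LeastI)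
  have before_d: "(f ^^ j) v \<noteq> r" if "j < d" for j
    using that not_less_Least unfolding d_def by blast
  have path_in_V: "(f ^^ i) v \<in> V" if "i \<le> d" for i
    using that by (induction i) (use assms(2,4) before_d in auto)
  have path_distinct: "(f ^^ i) v \<noteq> (f ^^ j) v" if "i < j" "j \<le> d" for i j
  proof
    assume "(f ^^ i) v = (f ^^ j) v"
    then have "(f ^^ (d - j + i)) v = (f ^^ (d - j + j)) v"
      by (simp add: funpow_add)
    with at_d that have "(f ^^ (d - j + i)) v = r" by simp
    with before_d that show False by simp
  qed
  have "inj_on (\<lambda>i. (f ^^ i) v) {0..d}"
    by (rule inj_onI) (metis atLeastAtMost_iff linorder_neqE_nat path_distinct)
  then have "card ((\<lambda>i. (f ^^ i) v) ` {0..d}) = Suc d"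
    by (simp add: card_image)
  moreover have "(\<lambda>i. (f ^^ i) v) ` {0..d} \<subseteq> V"
    using path_in_V by auto
  ultimately have "Suc d \<le> card V"
    by (metis assms(1) card_mono)
  then show ?thesis
    by (simp add: d_def)
qed

locale finite_game =
  fixes V N Act :: "'v set" and r :: 'v and par :: "'v \<Rightarrow> 'v"
  assumes game_tree: "game_tree V r par N Act"
begin

abbreviation C where "C \<equiv> children V r par"
abbreviation m where "m \<equiv> mval V r par N Act"
abbreviation \<beta> where "\<beta> \<equiv> beta V r par N Act"

lemma finite_V: "finite V" and root_in_V: "r \<in> V"
  and par_in_V: "\<And>v. v \<in> V \<Longrightarrow> v \<noteq> r \<Longrightarrow> par v \<in> V"
  and reaches_root: "\<And>v. v \<in> V \<Longrightarrow> \<exists>n. (par ^^ n) v = r"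
  using game_tree unfolding game_tree_def rooted_tree_def by auto

lemma internal_nodes: "N \<union> Act = V - leaves V r par"
  and infosets_actions_disjoint: "N \<inter> Act = {}"
  and root_infoset: "r \<in> N"
  and infoset_children: "\<And>v. v \<in> N \<Longrightarrow> C v \<subseteq> Act"
  and action_children: "\<And>a. a \<in> Act \<Longrightarrow> C a \<subseteq> N \<union> leaves V r par"
  using game_tree unfolding game_tree_def by auto

lemma childrenD: "w \<in> C v \<Longrightarrow> w \<in> V \<and> w \<noteq> r \<and> par w = v"
  unfolding children_def by auto

lemma action_children_not_actions: "a \<in> Act \<Longrightarrow> C a \<inter> Act = {}"
  using action_children internal_nodes infosets_actions_disjoint by blast

lemma infoset_children_not_infosets: "v \<in> N \<Longrightarrow> C v \<inter> N = {}"
  using infoset_children infosets_actions_disjoint by blast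

lemma finite_children: "finite (C v)"
  using finite_V unfolding children_def by simp

definition depth :: "'v \<Rightarrow> nat" where
  "depth v = (LEAST n. (par ^^ n) v = r)"

lemma depth_par:
  assumes "v \<in> V" and "v \<noteq> r"
  shows "depth v = Suc (depth (par v))"
proof -
  obtain n where "(par ^^ n) v = r"
    using reaches_root assms(1) by blast
  then show ?thesis
    unfolding depth_def using assms(2) by (rule Least_funpow_Suc)
qed

lemma depth_less_card:
  assumes "v \<in> V"
  shows "depth v < card V"
proof -
  obtain n where n: "(par ^^ n) v = r"
    using reaches_root assms by blast
  have "\<forall>x \<in> V - {r}. par x \<in> V"
    using par_in_V by blast
  from Least_funpow_less_card[OF finite_V assms n this] show ?thesis
    unfolding depth_def .
qed

lemma depth_child: "w \<in> C v \<Longrightarrow> depth w = Suc (depth v)"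
  using childrenD depth_par by metis

lemma card_V_eq_Suc:
  obtains n where "card V = Suc n"
proof -
  have "card V > 0"
    using finite_V root_in_V by (auto simp: card_gt_0_iff)
  then obtain n where "card V = Suc n"
    using gr0_implies_Suc by blast
  then show ?thesis
    by (rule that)
qed

text \<open>The fuel card V is irrelevant as soon as it covers the height of the subtree at v,
  which is at most card V - depth v.\<close>

lemma m_fuel_stable:
  "v \<in> V \<Longrightarrow> card V \<le> k + depth v \<Longrightarrow> card V \<le> k' + depth v \<Longrightarrow>
    m_fuel V r par N Act k v = m_fuel V r par N Act k' v"
proof (induction k arbitrary: v k')
  case 0
  then show ?case using depth_less_card by fastforce
next
  case (Suc k)
  have "k' \<noteq> 0"
    using Suc.prems depth_less_card[OF Suc.prems(1)] by linarith
  then obtain k1 where k': "k' = Suc k1"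
    using not0_implies_Suc by blast
  have children_eq: "m_fuel V r par N Act k w = m_fuel V r par N Act k1 w" if "w \<in> C v" for w
    using Suc.prems k' childrenD[OF that] depth_child[OF that] by (intro Suc.IH) auto
  have "(\<Sum>w \<in> C v \<inter> N. m_fuel V r par N Act k w) = (\<Sum>w \<in> C v \<inter> N. m_fuel V r par N Act k1 w)"
    by (rule sum.cong) (auto simp: children_eq)
  moreover have "(\<Sum>w \<in> C v. m_fuel V r par N Act k w) = (\<Sum>w \<in> C v. m_fuel V r par N Act k1 w)"
    by (rule sum.cong) (auto simp: children_eq)
  ultimately show ?case
    unfolding k' m_fuel.simps(2) by simp
qed

lemma m_action:
  assumes "a \<in> Act"
  shows "m a = 1 + (\<Sum>w \<in> C a \<inter> N. m w)"
proof -
  obtain n where n: "card V = Suc n"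
    by (rule card_V_eq_Suc)
  have "m a = 1 + (\<Sum>w \<in> C a \<inter> N. m_fuel V r par N Act n w)"
    using assms by (simp add: mval_def n)
  also have "(\<Sum>w \<in> C a \<inter> N. m_fuel V r par N Act n w) = (\<Sum>w \<in> C a \<inter> N. m w)"
  proof (rule sum.cong)
    fix w assume "w \<in> C a \<inter> N"
    then show "m_fuel V r par N Act n w = m w"
      unfolding mval_def using childrenD depth_child n by (intro m_fuel_stable) auto
  qed simp
  finally show ?thesis .
qed

lemma beta_fuel_stable:
  "v \<in> V \<Longrightarrow> depth v < k \<Longrightarrow> depth v < k' \<Longrightarrow>
    beta_fuel V r par N Act k v = beta_fuel V r par N Act k' v"
proof (induction k arbitrary: v k')
  case (Suc k)
  obtain k1 where k': "k' = Suc k1"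
    using Suc.prems(3) by (cases k') auto
  show ?case
  proof (cases "v = r")
    case False
    then have "beta_fuel V r par N Act k (par v) = beta_fuel V r par N Act k1 (par v)"
      using Suc.prems k' par_in_V[of v] depth_par[of v] by (intro Suc.IH) auto
    then show ?thesis
      unfolding k' by simp
  qed (simp add: k')
qed simp

lemma beta_root: "\<beta> r = 1"
proof -
  obtain n where "card V = Suc n"
    by (rule card_V_eq_Suc)
  then show ?thesis
    by (simp add: beta_def)
qed

lemma beta_nonroot:
  assumes "v \<in> V" and "v \<noteq> r"
  shows "\<beta> v = (if v \<in> Act then m v * \<beta> (par v) else \<beta> (par v) / m v)"
proof -
  obtain n where n: "card V = Suc n"
    by (rule card_V_eq_Suc)
  have "beta_fuel V r par N Act n (par v) = \<beta> (par v)"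
    unfolding beta_def using assms par_in_V depth_par depth_less_card n
    by (intro beta_fuel_stable) fastforce+
  then show ?thesis
    using assms by (simp add: beta_def n)
qed

lemma inverse_beta_action:
  assumes "a \<in> Act"
  shows "1 / \<beta> a = 1 / \<beta> (par a) - (\<Sum>w \<in> C a \<inter> N. 1 / \<beta> w)"
proof -
  have "a \<in> V" "a \<noteq> r"
    using assms internal_nodes infosets_actions_disjoint root_infoset by auto
  then have beta_a: "\<beta> a = m a * \<beta> (par a)"
    using assms beta_nonroot by simp
  have m_a_nonzero: "m a \<noteq> 0"
    using m_action[OF assms] by simp
  have "1 / \<beta> w = m w / \<beta> a" if "w \<in> C a \<inter> N" for w
    using that childrenD infosets_actions_disjoint beta_nonroot by fastforce
  then have "(\<Sum>w \<in> C a \<inter> N. 1 / \<beta> w) = (\<Sum>w \<in> C a \<inter> N. real (m w)) / \<beta> a"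
    by (simp add: sum_divide_distrib)
  also have "\<dots> = (real (m a) - 1) / \<beta> a"
    using m_action[OF assms] by simp
  also have "\<dots> = m a / \<beta> a - 1 / \<beta> a"
    by (simp add: diff_divide_distrib)
  also have "m a / \<beta> a = 1 / \<beta> (par a)"
    using beta_a m_a_nonzero by simp
  finally show ?thesis by simp
qed

end

locale game_strategy = finite_game +
  fixes \<sigma>
  assumes strategy: "is_strategy V r par N \<sigma>"
begin

abbreviation V\<^sub>\<sigma> where "V\<^sub>\<sigma> \<equiv> strat_nodes V r par N Act \<sigma>"

lemmas strat_nodes_intros =
  strat_nodes.intros[where V = V and r = r and par = par and N = N and Act = Act and \<sigma> = \<sigma>]

lemma strategy_child: "v \<in> N \<Longrightarrow> \<sigma> v \<in> C v"
  using strategy unfolding is_strategy_def by auto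

lemma strat_nodes_subset: "V\<^sub>\<sigma> \<subseteq> V"
proof
  show "x \<in> V" if "x \<in> V\<^sub>\<sigma>" for x
    using that by induction (use root_in_V strategy_child childrenD in auto)
qed

lemma finite_strat_nodes: "finite V\<^sub>\<sigma>"
  using strat_nodes_subset finite_V by (rule finite_subset)

lemma strat_action_par:
  assumes "a \<in> V\<^sub>\<sigma>" and "a \<in> Act"
  shows "par a \<in> N \<inter> V\<^sub>\<sigma> \<and> \<sigma> (par a) = a"
  using assms(1)
proof cases
  case root
  then show ?thesis using assms(2) root_infoset infosets_actions_disjoint by auto
next
  case (choose v)
  then show ?thesis using childrenD[OF strategy_child] by simp
next
  case (act b)
  then show ?thesis using assms(2) action_children_not_actions by blast
qed

lemma strat_infoset_par:
  assumes "v \<in> V\<^sub>\<sigma>" and "v \<in> N" and "v \<noteq> r"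
  shows "par v \<in> Act \<inter> V\<^sub>\<sigma> \<and> v \<in> C (par v)"
  using assms(1)
proof cases
  case root
  then show ?thesis using assms(3) by simp
next
  case (choose u)
  then show ?thesis using assms(2) strategy_child infoset_children_not_infosets by blast
next
  case (act b)
  then show ?thesis using childrenD[of v b] by auto
qed

lemma bij_betw_par_strat_actions: "bij_betw par (Act \<inter> V\<^sub>\<sigma>) (N \<inter> V\<^sub>\<sigma>)"
proof (rule bij_betw_imageI)
  show "inj_on par (Act \<inter> V\<^sub>\<sigma>)"
  proof (rule inj_onI)
    fix a b assume a: "a \<in> Act \<inter> V\<^sub>\<sigma>" and b: "b \<in> Act \<inter> V\<^sub>\<sigma>" and "par a = par b"
    have "a = \<sigma> (par a)"
      using a strat_action_par[of a] by simp
    also have "\<dots> = \<sigma> (par b)"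
      using \<open>par a = par b\<close> by (rule arg_cong)
    also have "\<dots> = b"
      using b strat_action_par[of b] by simp
    finally show "a = b" .
  qed
  have "v \<in> par ` (Act \<inter> V\<^sub>\<sigma>)" if "v \<in> N \<inter> V\<^sub>\<sigma>" for v
  proof
    show "v = par (\<sigma> v)"
      using that childrenD[OF strategy_child[of v]] by auto
    show "\<sigma> v \<in> Act \<inter> V\<^sub>\<sigma>"
      using that strategy_child[of v] infoset_children[of v] strat_nodes_intros(2)[of v] by blast
  qed
  then show "par ` (Act \<inter> V\<^sub>\<sigma>) = N \<inter> V\<^sub>\<sigma>"
    using strat_action_par by blast
qed

lemma strat_infosets_below_actions: "(\<Union>a \<in> Act \<inter> V\<^sub>\<sigma>. C a \<inter> N) = N \<inter> V\<^sub>\<sigma> - {r}"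
  using strat_nodes_intros(3) childrenD strat_infoset_par by fastforce

lemma sum_inverse_beta_strat_actions: "(\<Sum>a \<in> Act \<inter> V\<^sub>\<sigma>. 1 / \<beta> a) = 1"
proof -
  let ?f = "\<lambda>v. 1 / \<beta> v"
  have disjoint: "C a \<inter> N \<inter> (C b \<inter> N) = {}" if "a \<noteq> b" for a b
    using that childrenD by blast
  have "r \<in> N \<inter> V\<^sub>\<sigma>"
    using root_infoset strat_nodes_intros(1) by blast
  have "(\<Sum>a \<in> Act \<inter> V\<^sub>\<sigma>. ?f a) =
      (\<Sum>a \<in> Act \<inter> V\<^sub>\<sigma>. ?f (par a)) - (\<Sum>a \<in> Act \<inter> V\<^sub>\<sigma>. \<Sum>w \<in> C a \<inter> N. ?f w)"
    by (simp add: inverse_beta_action sum_subtractf)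
  also have "(\<Sum>a \<in> Act \<inter> V\<^sub>\<sigma>. ?f (par a)) = (\<Sum>v \<in> N \<inter> V\<^sub>\<sigma>. ?f v)"
    using bij_betw_par_strat_actions by (rule sum.reindex_bij_betw)
  also have "(\<Sum>a \<in> Act \<inter> V\<^sub>\<sigma>. \<Sum>w \<in> C a \<inter> N. ?f w) = sum ?f (\<Union>a \<in> Act \<inter> V\<^sub>\<sigma>. C a \<inter> N)"
    using finite_strat_nodes finite_children disjoint by (intro sum.UNION_disjoint[symmetric]) auto
  also have "\<dots> = (\<Sum>v \<in> N \<inter> V\<^sub>\<sigma> - {r}. ?f v)"
    unfolding strat_infosets_below_actions ..
  also have "(\<Sum>v \<in> N \<inter> V\<^sub>\<sigma>. ?f v) - (\<Sum>v \<in> N \<inter> V\<^sub>\<sigma> - {r}. ?f v) = ?f r"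
    using finite_strat_nodes \<open>r \<in> N \<inter> V\<^sub>\<sigma>\<close> by (simp add: sum_diff1)
  finally show ?thesis
    using beta_root by simp
qed

end

theorem mainTheorem4:
  fixes V N Act :: "'v set" and r :: 'v and par \<sigma> :: "'v \<Rightarrow> 'v"
  assumes "game_tree V r par N Act"
    and "is_strategy V r par N \<sigma>"
  shows "(\<Sum>a \<in> Act \<inter> strat_nodes V r par N Act \<sigma>. 1 / beta V r par N Act a) = 1"
proof -
  interpret game_strategy V N Act r par \<sigma>
    using assms by (simp add: game_strategy_def game_strategy_axioms_def finite_game_def)
  show ?thesis by (rule sum_inverse_beta_strat_actions)
qed

end
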